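(* Let $P$ be a multiprogram in which at most one thread per process calls deliver, and let $\widehat C$ be a finite computation of $\mathrm{TS}(P)$ satisfying $\mathrm{NW}$. Let $m_1,m_2$ be ORD messages carrying labels $g$ and $h$ with $h\neq\bot$ and queue elements $qe_1,qe_2$ respectively, with $qe_1.ts\le qe_2.ts$. Then for every process $\widehat p$ that performs an extractmin on $\mathrm{priorityQ}[h]$ returning $qe_2$, the enqueue by $\widehat p$ of $qe_1$ (into $\mathrm{priorityQ}[g]$ if $g\ne\bot$, or into the appropriate FIFO queue if $g=\bot$) precedes that extractmin in $\widehat p$'s program order.
   Context: $\mathrm{NW}$ (message-passing network model): processes communicate by $\mathrm{send}(s,d,m)$/$\mathrm{recv}(s,d,m)$ of uniquely identified messages; messages from a given sender to a given receiver are received in the order sent (FIFO channels), each message is received at most once and only after being sent; threads within a process share local variables whose accesses are sequentially consistent. Formally $\mathrm{NW}(C)$ holds iff for each process there is a valid total order of its operations extending $\to_{\mathrm{HappensBefore}}$, the transitive closure of program order, send-before-receive, FIFO-channel order, and writes-into order on local variables; and messages are received iff sent. The timestamp transformation $\mathrm{TS}$. Each process $\widehat p$ has: integer local-counter (initially 0); arrays $\mathrm{counter}[\cdot]$ and $T[\cdot]$ indexed by processes, initially 0; a priority queue $\mathrm{priorityQ}[l]$ for each label $l\in L$ ordered by (timestamp, source) lexicographically; a FIFO queue $\mathrm{fifoQ}[\widehat q]$ for each process $\widehat q$. Queue elements are $[u,ts,c,src]$. $\mathrm{bcast}(u,l)$ ($l\in L\cup\{\bot\}$): send $[\mathrm{LBR},u,l]$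 to $\widehat p$ itself. ProcessQueueElement$(qe,l,s)$: enqueue $qe$ into $\mathrm{priorityQ}[l]$ if $l\neq\bot$, else into $\mathrm{fifoQ}[s]$. HandleMessage: receive a message from some $\widehat s$; if $[\mathrm{LBR},u,l]$: $T[\widehat p]\gets T[\widehat p]+1$, local-counter $\gets$ local-counter$+1$, $qe\gets[u,T[\widehat p],\text{local-counter},\widehat p]$, ProcessQueueElement$(qe,l,\widehat p)$, send $[\mathrm{ORD},l,qe]$ to every other process; if $[\mathrm{TSUPD},t,\widehat q]$: $T[\widehat q]\gets t$; if $[\mathrm{ORD},l,qe]$: $T[\widehat s]\gets qe.ts$, ProcessQueueElement$(qe,l,\widehat s)$, and if $qe.ts>T[\widehat p]$ then $T[\widehat p]\gets qe.ts$ and send $[\mathrm{TSUPD},T[\widehat p],\widehat p]$ to every other process. CanExtract$(\mathrm{priorityQ}[l])$ holds iff the queue is nonempty and its minimum $qe$ satisfies $qe.c=\mathrm{counter}[qe.src]+1$ and $qe.ts\le T[\widehat q]$ for all $\widehat q$. CanDequeue$(\mathrm{fifoQ}[\widehat q])$ holds iff nonempty and its head $qe$ satisfies $qe.c=\mathrm{counter}[qe.src]+1$. deliver: while no priority queue satisfies CanExtract and no FIFO queue satisfies CanDequeue, call HandleMessage; then remove an element $qe$ from such a queue (extractmin, or FIFO dequeue), set $\mathrm{counter}[qe.src]\gets qe.c$, and return $qe.u$ with its label ($\bot$ for FIFO). Reads/writes of the original program are mapped to themselves. A queue element $qe$ sent in an ORD message is the element created by its source $qe.src$ when handling an LBR message.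 *)

theory Defs
  imports "HOL-Library.Multiset"
begin

text \<open>
  Labels of type 'l; the label bottom is None.  Processes are of a
  finite linearly ordered type 'p (the order is used to break ties in the
  priority queues).  Each process has (at most) one deliver thread; its
  program order is the list of its atomic actions (a HandleMessage step, or
  the final extraction of a deliver call).  All TS data structures of a
  process are accessed only by that thread.
\<close>

datatype ('p, 'u) qelem = QE (qu: 'u) (qts: nat) (qc: nat) (qsrc: 'p)

datatype ('p, 'l, 'u) msg =
    LBR 'u "'l option"
  | ORD "'l option" "('p, 'u) qelem"
  | TSUPD nat 'p

datatype ('p, 'l) qid = PQ 'l | FQ 'p

record ('p, 'l, 'u) tsstate =
  lcnt :: nat
  counter :: "'p \<Rightarrow> nat"
  Tv :: "'p \<Rightarrow> nat"
  priorityQ :: "'l \<Rightarrow> ('p, 'u) qelem multiset"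
  fifoQ :: "'p \<Rightarrow> ('p, 'u) qelem list"

datatype ('p, 'l, 'u) act =
    HandleMsg 'p "('p, 'l, 'u) msg"
  | ExtractMin 'l "('p, 'u) qelem"
  | Dequeue 'p

definition init_state :: "('p, 'l, 'u) tsstate" where
  "init_state = \<lparr>lcnt = 0, counter = (\<lambda>_. 0), Tv = (\<lambda>_. 0),
                 priorityQ = (\<lambda>_. {#}), fifoQ = (\<lambda>_. [])\<rparr>"

definition qid_of :: "'l option \<Rightarrow> 'p \<Rightarrow> ('p, 'l) qid" where
  "qid_of l s = (case l of Some l' \<Rightarrow> PQ l' | None \<Rightarrow> FQ s)"

definition process_qe ::
  "('p, 'u) qelem \<Rightarrow> 'l option \<Rightarrow> 'p \<Rightarrow> ('p, 'l, 'u) tsstate \<Rightarrow> ('p, 'l, 'u) tsstate" where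
  "process_qe qe l s st = (case l of
       Some l' \<Rightarrow> st\<lparr>priorityQ := (priorityQ st)(l' := priorityQ st l' + {#qe#})\<rparr>
     | None \<Rightarrow> st\<lparr>fifoQ := (fifoQ st)(s := fifoQ st s @ [qe])\<rparr>)"

definition qe_le :: "('p::linorder, 'u) qelem \<Rightarrow> ('p, 'u) qelem \<Rightarrow> bool" where
  "qe_le a b \<longleftrightarrow> qts a < qts b \<or> (qts a = qts b \<and> qsrc a \<le> qsrc b)"

definition is_min :: "('p::linorder, 'u) qelem multiset \<Rightarrow> ('p, 'u) qelem \<Rightarrow> bool" where
  "is_min Q qe \<longleftrightarrow> qe \<in># Q \<and> (\<forall>qe' \<in># Q. qe_le qe qe')"

definition extractable :: "('p::linorder, 'l, 'u) tsstate \<Rightarrow> ('p, 'u) qelem \<Rightarrow> bool" where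
  "extractable st qe \<longleftrightarrow> qc qe = counter st (qsrc qe) + 1 \<and> (\<forall>q. qts qe \<le> Tv st q)"

definition can_extract :: "('p::linorder, 'l, 'u) tsstate \<Rightarrow> 'l \<Rightarrow> bool" where
  "can_extract st l \<longleftrightarrow> (\<exists>qe. is_min (priorityQ st l) qe \<and> extractable st qe)"

definition can_dequeue :: "('p, 'l, 'u) tsstate \<Rightarrow> 'p \<Rightarrow> bool" where
  "can_dequeue st q \<longleftrightarrow> fifoQ st q \<noteq> [] \<and>
     qc (hd (fifoQ st q)) = counter st (qsrc (hd (fifoQ st q))) + 1"

text \<open>Enabledness of an action of the deliver thread of process p in state st.
  HandleMessage is only called inside the while loop of deliver, i.e. when no
  queue can be extracted from / dequeued.\<close>
definition enabled :: "('p::linorder, 'l, 'u) tsstate \<Rightarrow> ('p, 'l, 'u) act \<Rightarrow> bool" where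
  "enabled st a = (case a of
      HandleMsg s m \<Rightarrow> (\<forall>l. \<not> can_extract st l) \<and> (\<forall>q. \<not> can_dequeue st q)
    | ExtractMin l qe \<Rightarrow> is_min (priorityQ st l) qe \<and> extractable st qe
    | Dequeue q \<Rightarrow> can_dequeue st q)"

definition step :: "'p \<Rightarrow> ('p, 'l, 'u) tsstate \<Rightarrow> ('p, 'l, 'u) act \<Rightarrow> ('p, 'l, 'u) tsstate" where
  "step p st a = (case a of
      HandleMsg s (LBR u l) \<Rightarrow>
        (let st1 = st\<lparr>Tv := (Tv st)(p := Tv st p + 1), lcnt := lcnt st + 1\<rparr>;
             qe = QE u (Tv st1 p) (lcnt st1) p
         in process_qe qe l p st1)
    | HandleMsg s (TSUPD t q) \<Rightarrow> st\<lparr>Tv := (Tv st)(q := t)\<rparr>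
    | HandleMsg s (ORD l qe) \<Rightarrow>
        (let st1 = process_qe qe l s (st\<lparr>Tv := (Tv st)(s := qts qe)\<rparr>)
         in if qts qe > Tv st1 p then st1\<lparr>Tv := (Tv st1)(p := qts qe)\<rparr> else st1)
    | ExtractMin l qe \<Rightarrow>
        st\<lparr>priorityQ := (priorityQ st)(l := priorityQ st l - {#qe#}),
           counter := (counter st)(qsrc qe := qc qe)\<rparr>
    | Dequeue q \<Rightarrow>
        st\<lparr>fifoQ := (fifoQ st)(q := tl (fifoQ st q)),
           counter := (counter st)(qsrc (hd (fifoQ st q)) := qc (hd (fifoQ st q)))\<rparr>)"

definition out_msg :: "'p \<Rightarrow> ('p, 'l, 'u) tsstate \<Rightarrow> ('p, 'l, 'u) act \<Rightarrow> 'p \<Rightarrow> ('p, 'l, 'u) msg option" where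
  "out_msg p st a d = (if d = p then None else (case a of
      HandleMsg s (LBR u l) \<Rightarrow> Some (ORD l (QE u (Tv st p + 1) (lcnt st + 1) p))
    | HandleMsg s (ORD l qe) \<Rightarrow>
        (let T1 = (Tv st)(s := qts qe)
         in if qts qe > T1 p then Some (TSUPD (qts qe) p) else None)
    | _ \<Rightarrow> None))"

definition enq_event :: "'p \<Rightarrow> ('p, 'l, 'u) tsstate \<Rightarrow> ('p, 'l, 'u) act \<Rightarrow> (('p, 'l) qid \<times> ('p, 'u) qelem) option" where
  "enq_event p st a = (case a of
      HandleMsg s (LBR u l) \<Rightarrow> Some (qid_of l p, QE u (Tv st p + 1) (lcnt st + 1) p)
    | HandleMsg s (ORD l qe) \<Rightarrow> Some (qid_of l s, qe)
    | _ \<Rightarrow> None)"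

definition st_at :: "'p \<Rightarrow> ('p, 'l, 'u) act list \<Rightarrow> nat \<Rightarrow> ('p, 'l, 'u) tsstate" where
  "st_at p tr i = fold (\<lambda>a st. step p st a) (take i tr) init_state"

definition valid_trace :: "'p::linorder \<Rightarrow> ('p, 'l, 'u) act list \<Rightarrow> bool" where
  "valid_trace p tr \<longleftrightarrow> (\<forall>i < length tr. enabled (st_at p tr i) (tr ! i))"

definition sent_msgs :: "('p \<Rightarrow> ('p, 'l, 'u) act list) \<Rightarrow> 'p \<Rightarrow> 'p \<Rightarrow> ('p, 'l, 'u) msg list" where
  "sent_msgs tr p d =
     concat (map (\<lambda>i. case out_msg p (st_at p (tr p) i) (tr p ! i) d of None \<Rightarrow> [] | Some m \<Rightarrow> [m])
                 [0..<length (tr p)])"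

definition recv_msgs :: "('p \<Rightarrow> ('p, 'l, 'u) act list) \<Rightarrow> 'p \<Rightarrow> 'p \<Rightarrow> ('p, 'l, 'u) msg list" where
  "recv_msgs tr d s = [m. HandleMsg s' m \<leftarrow> tr d, s' = s]"

text \<open>A finite computation of TS(P) satisfying NW (abstracted to the deliver threads):
  every deliver thread follows the algorithm; on each channel between distinct
  processes the received messages are exactly the sent ones, in FIFO order
  (messages received iff sent, at most once, in sending order); messages a
  process receives from itself are the LBR messages sent by its own bcast calls
  (the rest of the program P is arbitrary, so these are unconstrained).\<close>
definition ts_computation :: "('p::linorder \<Rightarrow> ('p, 'l, 'u) act list) \<Rightarrow> bool" where
  "ts_computation tr \<longleftrightarrow>
     (\<forall>p. valid_trace p (tr p)) \<and>
     (\<forall>p d. p \<noteq> d \<longrightarrow> recv_msgs tr d p = sent_msgs tr p d) \<and>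
     (\<forall>p m. HandleMsg p m \<in> set (tr p) \<longrightarrow> (\<exists>u l. m = LBR u l))"

end

theory Submission
  imports Defs
begin

text \<open>
  Extractability of qe2 at process p forces every entry T[q] of p to be at least qts qe2,
  hence at least qts qe1.  If p created qe1 itself, its own entry T[p] grows monotonically
  and exceeded its value at the creation of qe1 only afterwards, so the creation (which is
  the enqueue) came first.  Otherwise qe1 was sent by its creator s to p, and T[s] at p is
  the timestamp of the last message received from s.  The timestamps of the messages s
  sends to p strictly increase, so by FIFO delivery a received message with timestamp at
  least qts qe1 can only arrive after the ORD message carrying qe1, whose reception is the
  enqueue.
\<close>

definition recv_from :: "('p, 'l, 'u) act list \<Rightarrow> 'p \<Rightarrow> ('p, 'l, 'u) msg list" where
  "recv_from xs s = [m. HandleMsg s' m \<leftarrow> xs, s' = s]"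

lemma recv_msgs_eq_recv_from: "recv_msgs tr d s = recv_from (tr d) s"
  by (simp add: recv_msgs_def recv_from_def)

lemma recv_from_append: "recv_from (xs @ ys) s = recv_from xs s @ recv_from ys s"
  by (simp add: recv_from_def)

lemma recv_from_single:
  "recv_from [a] s = (case a of HandleMsg s' m \<Rightarrow> if s' = s then [m] else [] | _ \<Rightarrow> [])"
  by (cases a) (auto simp: recv_from_def)

lemma set_recv_from: "m \<in> set (recv_from xs s) \<longleftrightarrow> HandleMsg s m \<in> set xs"
  by (induction xs) (auto simp: recv_from_def split: act.splits)

lemma st_at_Suc: "i < length xs \<Longrightarrow> st_at p xs (Suc i) = step p (st_at p xs i) (xs ! i)"
  by (simp add: st_at_def take_Suc_conv_app_nth)

fun msg_ts :: "('p, 'l, 'u) msg \<Rightarrow> nat" where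
  "msg_ts (ORD l qe) = qts qe"
| "msg_ts (TSUPD t q) = t"
| "msg_ts (LBR u l) = 0"

definition authored_by :: "'p \<Rightarrow> ('p, 'l, 'u) msg \<Rightarrow> bool" where
  "authored_by s m = (case m of ORD l qe \<Rightarrow> qsrc qe = s | TSUPD t q \<Rightarrow> q = s | LBR u l \<Rightarrow> False)"

text \<open>Rules out a received TSUPD naming p itself, the only action that could lower T[p].\<close>
definition wf_act :: "'p \<Rightarrow> ('p, 'l, 'u) act \<Rightarrow> bool" where
  "wf_act p a = (case a of
      HandleMsg s m \<Rightarrow> (s = p \<and> (\<exists>u l. m = LBR u l)) \<or> (s \<noteq> p \<and> authored_by s m)
    | _ \<Rightarrow> True)"

lemma out_msg_authored: "out_msg p st a d = Some m \<Longrightarrow> authored_by p m \<and> d \<noteq> p"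
  by (auto simp: out_msg_def authored_by_def Let_def split: act.splits msg.splits if_splits)

lemma out_msg_ORD:
  assumes "out_msg s st a d = Some (ORD g qe)"
  obtains s' u where "a = HandleMsg s' (LBR u g)" "qe = QE u (Tv st s + 1) (lcnt st + 1) s"
  using assms by (auto simp: out_msg_def Let_def split: act.splits msg.splits if_splits)

lemma set_sent_msgs:
  "m \<in> set (sent_msgs tr p d) \<longleftrightarrow>
     (\<exists>i < length (tr p). out_msg p (st_at p (tr p) i) (tr p ! i) d = Some m)"
  by (auto simp: sent_msgs_def split: option.splits) (metis atLeastLessThan_iff zero_le)

lemma ts_computation_enabled:
  "ts_computation tr \<Longrightarrow> j < length (tr p) \<Longrightarrow> enabled (st_at p (tr p) j) (tr p ! j)"
  by (simp add: ts_computation_def valid_trace_def)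

lemma ts_computation_wf_act:
  assumes "ts_computation tr" "a \<in> set (tr p)"
  shows "wf_act p a"
proof (cases a)
  case (HandleMsg s m)
  show ?thesis
  proof (cases "s = p")
    case True
    then show ?thesis using assms HandleMsg by (auto simp: ts_computation_def wf_act_def)
  next
    case False
    have "m \<in> set (recv_msgs tr p s)"
      using assms(2) HandleMsg by (simp add: recv_msgs_eq_recv_from set_recv_from)
    then have "m \<in> set (sent_msgs tr s p)" using assms(1) False by (simp add: ts_computation_def)
    then show ?thesis
      using out_msg_authored False HandleMsg unfolding set_sent_msgs wf_act_def by fastforce
  qed
qed (auto simp: wf_act_def)

lemma Tv_own_step_mono: "wf_act p a \<Longrightarrow> Tv st p \<le> Tv (step p st a) p"
  by (auto simp: step_def wf_act_def authored_by_def process_qe_def Let_def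
           split: act.splits msg.splits if_splits option.splits)

lemma msg_ts_out_msg:
  "out_msg p st a d = Some m \<Longrightarrow> wf_act p a \<Longrightarrow>
     Tv st p < msg_ts m \<and> msg_ts m = Tv (step p st a) p"
  by (auto simp: out_msg_def step_def wf_act_def authored_by_def process_qe_def Let_def
           split: act.splits msg.splits if_splits option.splits)

lemma Tv_other_step:
  "wf_act p a \<Longrightarrow> r \<noteq> p \<Longrightarrow> Tv (step p st a) r =
     (case a of HandleMsg s m \<Rightarrow> if s = r then msg_ts m else Tv st r | _ \<Rightarrow> Tv st r)"
  by (auto simp: step_def wf_act_def authored_by_def process_qe_def Let_def
           split: act.splits msg.splits if_splits option.splits)

lemma Tv_own_mono:
  assumes "\<forall>a \<in> set xs. wf_act p a" "i \<le> k" "k \<le> length xs"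
  shows "Tv (st_at p xs i) p \<le> Tv (st_at p xs k) p"
  using assms(2,3)
proof (induction k)
  case (Suc k)
  show ?case
  proof (cases "i = Suc k")
    case False
    then have "Tv (st_at p xs i) p \<le> Tv (st_at p xs k) p" using Suc by simp
    also have "\<dots> \<le> Tv (st_at p xs (Suc k)) p"
      using Suc.prems(2) assms(1) by (simp add: st_at_Suc Tv_own_step_mono)
    finally show ?thesis .
  qed simp
qed simp

text \<open>Entry r of p's timestamp array is only written when p handles a message from r.\<close>
lemma Tv_other_eq_last_recv:
  assumes "\<forall>a \<in> set xs. wf_act p a" "r \<noteq> p" "i \<le> length xs"
  shows "Tv (st_at p xs i) r =
           (if recv_from (take i xs) r = [] then 0 else msg_ts (last (recv_from (take i xs) r)))"
  using assms(3)
proof (induction i)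
  case 0
  then show ?case by (simp add: st_at_def init_state_def recv_from_def)
next
  case (Suc i)
  have "take (Suc i) xs = take i xs @ [xs ! i]"
    using Suc.prems by (simp add: take_Suc_conv_app_nth)
  then show ?case
    using Suc assms(1,2)
    by (auto simp: st_at_Suc recv_from_append recv_from_single Tv_other_step split: act.splits)
qed

definition sent_prefix :: "'p \<Rightarrow> ('p, 'l, 'u) act list \<Rightarrow> 'p \<Rightarrow> nat \<Rightarrow> ('p, 'l, 'u) msg list" where
  "sent_prefix p xs d n = concat (map (\<lambda>i. case out_msg p (st_at p xs i) (xs ! i) d of
                                              None \<Rightarrow> [] | Some m \<Rightarrow> [m]) [0..<n])"

lemma sent_prefix_ts_sorted:
  assumes "\<forall>a \<in> set xs. wf_act p a" "n \<le> length xs"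
  shows "sorted_wrt (<) (map msg_ts (sent_prefix p xs d n)) \<and>
         (\<forall>m \<in> set (sent_prefix p xs d n). msg_ts m \<le> Tv (st_at p xs n) p)"
  using assms(2)
proof (induction n)
  case 0
  then show ?case by (simp add: sent_prefix_def)
next
  case (Suc n)
  have wf: "wf_act p (xs ! n)" using assms(1) Suc.prems by simp
  have mono: "Tv (st_at p xs n) p \<le> Tv (st_at p xs (Suc n)) p"
    using Suc.prems wf by (simp add: st_at_Suc Tv_own_step_mono)
  show ?case
  proof (cases "out_msg p (st_at p xs n) (xs ! n) d")
    case None
    then show ?thesis using Suc mono by (fastforce simp: sent_prefix_def)
  next
    case (Some m)
    have "Tv (st_at p xs n) p < msg_ts m \<and> msg_ts m = Tv (st_at p xs (Suc n)) p"
      using msg_ts_out_msg[OF Some wf] Suc.prems by (simp add: st_at_Suc)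
    then show ?thesis using Suc Some by (fastforce simp: sent_prefix_def sorted_wrt_append)
  qed
qed

lemma sent_msgs_ts_sorted:
  "\<forall>a \<in> set (tr p). wf_act p a \<Longrightarrow> sorted_wrt (<) (map msg_ts (sent_msgs tr p d))"
  using sent_prefix_ts_sorted[of "tr p" p "length (tr p)" d]
  by (simp add: sent_msgs_def sent_prefix_def)

lemma Tv_own_reaches_after_creation:
  assumes "\<forall>a \<in> set xs. wf_act p a" "i < length xs" "j \<le> length xs"
    and "Tv (st_at p xs i) p < Tv (st_at p xs j) p"
  shows "i < j"
  using Tv_own_mono[OF assms(1), of j i] assms(2-4) by (cases "j \<le> i") auto

text \<open>FIFO delivery together with strictly increasing timestamps on each channel.\<close>
lemma recv_before_Tv_reaches:
  assumes comp: "ts_computation tr" and "s \<noteq> p"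
    and sent: "m \<in> set (sent_msgs tr s p)" and pos: "0 < msg_ts m"
    and j: "j \<le> length (tr p)" and reach: "msg_ts m \<le> Tv (st_at p (tr p) j) s"
  shows "HandleMsg s m \<in> set (take j (tr p))"
proof -
  let ?before = "recv_from (take j (tr p)) s" and ?after = "recv_from (drop j (tr p)) s"
  have wf: "\<And>q. \<forall>a \<in> set (tr q). wf_act q a" using ts_computation_wf_act[OF comp] by blast
  have channel: "sent_msgs tr s p = ?before @ ?after"
    using comp \<open>s \<noteq> p\<close>
    by (simp add: ts_computation_def recv_msgs_eq_recv_from recv_from_append[symmetric])
  have Tv_s: "Tv (st_at p (tr p) j) s = (if ?before = [] then 0 else msg_ts (last ?before))"
    using Tv_other_eq_last_recv[of "tr p" p s j] wf \<open>s \<noteq> p\<close> j by simp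
  then have nonempty: "?before \<noteq> []" and le_last: "msg_ts m \<le> msg_ts (last ?before)"
    using reach pos by (auto split: if_splits)
  have "m \<in> set ?before"
  proof (rule ccontr)
    assume "m \<notin> set ?before"
    then have "m \<in> set ?after" using sent channel by auto
    moreover have "last ?before \<in> set ?before" using nonempty by simp
    ultimately have "msg_ts (last ?before) < msg_ts m"
      using sent_msgs_ts_sorted[of tr s p, OF wf] unfolding channel
      by (fastforce simp: sorted_wrt_append)
    then show False using le_last by simp
  qed
  then show ?thesis by (simp add: set_recv_from)
qed

theorem mainTheorem6:
  fixes tr :: "'p::{finite, linorder} \<Rightarrow> ('p, 'l, 'u) act list"
    and g :: "'l option" and h :: 'l
    and qe1 qe2 :: "('p, 'u) qelem"
  assumes "ts_computation tr"
    and "ORD g qe1 \<in> set (sent_msgs tr s1 d1)"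
    and "ORD (Some h) qe2 \<in> set (sent_msgs tr s2 d2)"
    and "qts qe1 \<le> qts qe2"
    and "j < length (tr p)"
    and "tr p ! j = ExtractMin h qe2"
  shows "\<exists>i < j. enq_event p (st_at p (tr p) i) (tr p ! i) = Some (qid_of g (qsrc qe1), qe1)"
proof -
  have reach: "\<And>q. qts qe1 \<le> Tv (st_at p (tr p) j) q"
    using ts_computation_enabled[OF assms(1,5)] assms(4,6)
    by (auto simp: enabled_def extractable_def intro: le_trans)
  obtain i where i: "i < length (tr s1)"
    and out: "out_msg s1 (st_at s1 (tr s1) i) (tr s1 ! i) d1 = Some (ORD g qe1)"
    using assms(2) unfolding set_sent_msgs by blast
  obtain s u where act: "tr s1 ! i = HandleMsg s (LBR u g)"
    and qe1: "qe1 = QE u (Tv (st_at s1 (tr s1) i) s1 + 1) (lcnt (st_at s1 (tr s1) i) + 1) s1"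
    using out_msg_ORD[OF out] .
  show ?thesis
  proof (cases "p = s1")
    case True
    have "i < j"
      using Tv_own_reaches_after_creation[of "tr p" p i j] ts_computation_wf_act[OF assms(1)]
        reach[of p] i assms(5) qe1 True by fastforce
    then show ?thesis using act qe1 True by (auto simp: enq_event_def)
  next
    case False
    have "ORD g qe1 \<in> set (sent_msgs tr s1 p)"
      using out out_msg_authored[OF out] False i unfolding set_sent_msgs
      by (auto simp: out_msg_def)
    then have "HandleMsg s1 (ORD g qe1) \<in> set (take j (tr p))"
      using recv_before_Tv_reaches[OF assms(1)] False reach assms(5) qe1 by force
    then obtain k where "k < j" "tr p ! k = HandleMsg s1 (ORD g qe1)"
      by (auto simp: in_set_conv_nth)
    then show ?thesis using qe1 by (auto simp: enq_event_def)
  qed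
qed

end
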